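(* Let $A,A'\in\mathbb{C}^{n\times n}$ with $\|A\|_F=\|A'\|_F=1$, $\lambda,\lambda'\in\mathbb{C}$ and $v\in\mathbb{C}^n$ nonzero. If $\mu(A,\lambda,v)\big(\|A'-A\|_F+|\lambda'-\lambda|\big)\le\varepsilon<1$, then $(1-\varepsilon)\mu(A,\lambda,v)\le\mu(A',\lambda',v)\le\frac{1}{1-\varepsilon}\mu(A,\lambda,v)$.
   Context: $\|\cdot\|_F$ is the Frobenius norm. For $v\ne0$, $T_v=v^\perp\subset\mathbb{C}^n$, $P_{v^\perp}$ the orthogonal projection onto $T_v$, $A_{\lambda,v}=P_{v^\perp}(A-\lambda\mathrm{Id})|_{T_v}$, and $\mu(A,\lambda,v)=\|A\|_F\|A_{\lambda,v}^{-1}\|$ (operator norm; $\infty$ if not invertible). No eigen-relation between $A,\lambda,v$ is assumed. *)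

theory Defs
  imports "HOL-Analysis.Analysis"
begin

definition frob_norm :: "complex^'n^'n \<Rightarrow> real" where
  "frob_norm A = sqrt (\<Sum>i\<in>UNIV. \<Sum>j\<in>UNIV. (cmod (A$i$j))\<^sup>2)"

definition hinner :: "complex^'n \<Rightarrow> complex^'n \<Rightarrow> complex" where
  "hinner x y = (\<Sum>i\<in>UNIV. cnj (x$i) * y$i)"

definition orth_comp :: "complex^'n \<Rightarrow> (complex^'n) set" where
  "orth_comp v = {x. hinner v x = 0}"

definition proj_perp :: "complex^'n \<Rightarrow> complex^'n \<Rightarrow> complex^'n" where
  "proj_perp v x = x - (hinner v x / hinner v v) *s v"

(* A_{lambda,v} = P_{v^perp} (A - lambda Id), considered on T_v *)
definition A_lv :: "complex^'n^'n \<Rightarrow> complex \<Rightarrow> complex^'n \<Rightarrow> complex^'n \<Rightarrow> complex^'n" where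
  "A_lv A l v x = proj_perp v (A *v x - l *s x)"

definition op_norm_on :: "(complex^'n) set \<Rightarrow> (complex^'n \<Rightarrow> complex^'n) \<Rightarrow> real" where
  "op_norm_on S g = Sup {norm (g y) | y. y \<in> S \<and> norm y \<le> 1}"

definition mu :: "complex^'n^'n \<Rightarrow> complex \<Rightarrow> complex^'n \<Rightarrow> ereal" where
  "mu A l v = (if bij_betw (A_lv A l v) (orth_comp v) (orth_comp v)
     then ereal (frob_norm A * op_norm_on (orth_comp v) (inv_into (orth_comp v) (A_lv A l v)))
     else \<infinity>)"

end

theory Submission imports Defs begin

text \<open>Write B and B' for the restrictions of A_{\<lambda>,v} and A'_{\<lambda>',v} to the orthogonal
  complement of v, M = ||B^-1|| and d = ||A' - A||_F + |\<lambda>' - \<lambda>|. The projection is contractive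
  and the Frobenius norm dominates the operator norm, so ||B' y - B y|| \<le> d ||y||. Hence
  ||y|| \<le> M ||B y|| \<le> M ||B' y|| + \<epsilon> ||y||, so B' is injective, hence bijective on the
  finite-dimensional complement, with ||B'^-1|| \<le> M / (1 - \<epsilon>). Symmetrically
  ||B' y|| \<le> (1 + \<epsilon>) ||B y|| gives M \<le> (1 + \<epsilon>) ||B'^-1||, and (1 - \<epsilon>)(1 + \<epsilon>) \<le> 1.
  If \<mu>(A,\<lambda>,v) is infinite, the hypothesis forces d = 0, so B' = B.\<close>

lemma inner_eq_Re_hinner: "inner x y = Re (hinner x y)"
  by (simp add: hinner_def inner_vec_def inner_complex_def Re_sum)

lemma hinner_add_right: "hinner v (x + y) = hinner v x + hinner v y"
  by (simp add: hinner_def distrib_left sum.distrib)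

lemma hinner_diff_right: "hinner v (x - y) = hinner v x - hinner v y"
  by (simp add: hinner_def right_diff_distrib sum_subtractf)

lemma hinner_smult_right: "hinner v (c *s x) = c * hinner v x"
  by (simp add: hinner_def sum_distrib_left mult.left_commute)

lemma hinner_smult_left: "hinner (c *s v) x = cnj c * hinner v x"
  by (simp add: hinner_def sum_distrib_left mult.assoc)

lemma scaleR_eq_vector_smult: "r *\<^sub>R (x::complex^'n) = complex_of_real r *s x"
  by (rule vec_eq_iff[THEN iffD2], rule allI, subst vector_scaleR_component, simp add: scaleR_conv_of_real)

lemma hinner_scaleR_right: "hinner v (r *\<^sub>R x) = of_real r * hinner v x"
  by (simp add: scaleR_eq_vector_smult hinner_smult_right)

lemma hinner_zero_right [simp]: "hinner v 0 = 0"
  by (simp add: hinner_def)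

lemma hinner_self_nonzero: "v \<noteq> 0 \<Longrightarrow> hinner v v \<noteq> 0"
  using inner_eq_Re_hinner[of v v] by (metis inner_eq_zero_iff zero_complex.sel(1))

lemma subspace_orth_comp: "subspace (orth_comp v)"
  by (auto simp: subspace_def orth_comp_def hinner_add_right hinner_scaleR_right)

lemma proj_perp_in_orth_comp: "v \<noteq> 0 \<Longrightarrow> proj_perp v x \<in> orth_comp v"
  using hinner_self_nonzero[of v]
  by (simp add: orth_comp_def proj_perp_def hinner_diff_right hinner_smult_right)

lemma linear_proj_perp: "linear (proj_perp v)"
  by (rule linearI) (simp_all add: proj_perp_def hinner_add_right hinner_smult_right
      scaleR_eq_vector_smult vec_eq_iff add_divide_distrib algebra_simps)

lemma norm_proj_perp_le:
  assumes "v \<noteq> 0"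
  shows "norm (proj_perp v x) \<le> norm x"
proof -
  define c where "c = hinner v x / hinner v v"
  have decomp: "x = proj_perp v x + c *s v"
    by (simp add: proj_perp_def c_def)
  have "hinner v (proj_perp v x) = 0"
    using proj_perp_in_orth_comp[OF assms] by (simp add: orth_comp_def)
  then have "orthogonal (proj_perp v x) (c *s v)"
    by (subst orthogonal_commute) (simp add: orthogonal_def inner_eq_Re_hinner hinner_smult_left)
  then have "(norm x)\<^sup>2 = (norm (proj_perp v x))\<^sup>2 + (norm (c *s v))\<^sup>2"
    using norm_add_Pythagorean decomp by metis
  then have "(norm (proj_perp v x))\<^sup>2 \<le> (norm x)\<^sup>2"
    by simp
  then show ?thesis
    by (simp add: power2_le_iff_abs_le)
qed

lemma norm_smult_vec: "norm (c *s (y::complex^'n)) = cmod c * norm y"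
  by (simp add: norm_vec_def norm_mult L2_set_right_distrib)

lemma frob_norm_nonneg: "0 \<le> frob_norm C"
  by (simp add: frob_norm_def sum_nonneg)

lemma frob_norm_eq_L2_set:
  "frob_norm C = L2_set (\<lambda>i. L2_set (\<lambda>j. cmod (C$i$j)) UNIV) UNIV"
  by (simp add: frob_norm_def L2_set_def sum_nonneg)

lemma norm_matrix_vector_mult_le_frob_norm:
  "norm ((C::complex^'n^'n) *v y) \<le> frob_norm C * norm y"
proof -
  have row: "cmod ((C *v y)$i) \<le> L2_set (\<lambda>j. cmod (C$i$j)) UNIV * norm y" for i
  proof -
    have "cmod ((C *v y)$i) \<le> (\<Sum>j\<in>UNIV. \<bar>cmod (C$i$j)\<bar> * \<bar>cmod (y$j)\<bar>)"
      unfolding matrix_vector_mult_def vec_lambda_beta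
      by (rule order_trans[OF norm_sum]) (simp add: norm_mult)
    also have "\<dots> \<le> L2_set (\<lambda>j. cmod (C$i$j)) UNIV * L2_set (\<lambda>j. cmod (y$j)) UNIV"
      by (rule L2_set_mult_ineq)
    finally show ?thesis by (simp add: norm_vec_def)
  qed
  have "norm (C *v y) = L2_set (\<lambda>i. cmod ((C *v y)$i)) UNIV"
    by (simp add: norm_vec_def)
  also have "\<dots> \<le> L2_set (\<lambda>i. L2_set (\<lambda>j. cmod (C$i$j)) UNIV * norm y) UNIV"
    by (rule L2_set_mono) (use row in auto)
  also have "\<dots> = frob_norm C * norm y"
    by (simp add: frob_norm_eq_L2_set L2_set_left_distrib)
  finally show ?thesis .
qed

lemma linear_A_lv: "linear (A_lv A l v)"
proof -
  have "linear (\<lambda>x. A *v x - l *s x)"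
    by (rule linearI) (simp_all add: scaleR_eq_vector_smult vec_eq_iff matrix_vector_mult_def
        sum.distrib sum_distrib_left algebra_simps)
  moreover have "A_lv A l v = proj_perp v \<circ> (\<lambda>x. A *v x - l *s x)"
    by (simp add: A_lv_def fun_eq_iff)
  ultimately show ?thesis
    using linear_compose linear_proj_perp by metis
qed

lemma A_lv_image_subset: "v \<noteq> 0 \<Longrightarrow> A_lv A l v ` T \<subseteq> orth_comp v"
  by (auto simp: A_lv_def proj_perp_in_orth_comp)

lemma norm_A_lv_diff_le:
  assumes "v \<noteq> 0"
  shows "norm (A_lv A' l' v y - A_lv A l v y) \<le> (frob_norm (A' - A) + cmod (l' - l)) * norm y"
proof -
  have "A_lv A' l' v y - A_lv A l v y = proj_perp v ((A' - A) *v y - (l' - l) *s y)"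
    unfolding A_lv_def linear_diff[OF linear_proj_perp, symmetric]
    by (simp add: matrix_vector_mult_diff_rdistrib algebra_simps vec_eq_iff)
  then have "norm (A_lv A' l' v y - A_lv A l v y) \<le> norm ((A' - A) *v y - (l' - l) *s y)"
    using norm_proj_perp_le[OF assms] by simp
  also have "\<dots> \<le> norm ((A' - A) *v y) + norm ((l' - l) *s y)"
    by (rule norm_triangle_ineq4)
  also have "\<dots> \<le> (frob_norm (A' - A) + cmod (l' - l)) * norm y"
    using norm_matrix_vector_mult_le_frob_norm[of "A' - A" y] norm_smult_vec[of "l' - l" y]
    by (simp add: algebra_simps)
  finally show ?thesis .
qed

locale linear_bij_on_subspace =
  fixes T :: "(complex^'n) set" and g :: "complex^'n \<Rightarrow> complex^'n"
  assumes linear: "linear g" and subspace: "subspace T" and bij: "bij_betw g T T"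
begin

lemma inj: "inj_on g T"
  using bij by (simp add: bij_betw_def)

lemma bdd_above_inv_norms: "bdd_above {norm (inv_into T g y) | y. y \<in> T \<and> norm y \<le> 1}"
proof -
  have "inj_on g (span T)"
    using inj subspace by (simp add: span_eq_iff[THEN iffD2])
  from linear_inj_on_left_inverse[OF linear this]
  obtain k where k: "linear k" "\<forall>x\<in>span T. k (g x) = x"
    by blast
  obtain K where K: "\<And>x. norm (k x) \<le> K * norm x"
    using linear_bounded[OF k(1)] by blast
  have "norm (inv_into T g y) \<le> max K 0" if "y \<in> T" "norm y \<le> 1" for y
  proof -
    have "y \<in> g ` T"
      using bij \<open>y \<in> T\<close> by (simp add: bij_betw_def)
    then obtain x where x: "x \<in> T" "y = g x"
      by blast
    have "inv_into T g y = x"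
      unfolding x(2) by (rule inv_into_f_f[OF inj x(1)])
    also have "\<dots> = k y"
      unfolding x(2) using k(2) span_base[OF x(1)] by simp
    finally have "inv_into T g y = k y" .
    then have "norm (inv_into T g y) \<le> K * norm y"
      using K by simp
    also have "\<dots> \<le> max K 0"
    proof (cases "K \<ge> 0")
      case True
      then show ?thesis
        using \<open>norm y \<le> 1\<close> by (simp add: mult_left_le)
    next
      case False
      then show ?thesis
        by (simp add: mult_nonpos_nonneg)
    qed
    finally show ?thesis .
  qed
  then show ?thesis
    unfolding bdd_above_def by blast
qed

lemma op_norm_inv_nonneg: "0 \<le> op_norm_on T (inv_into T g)"
proof -
  have "norm (inv_into T g 0) \<le> op_norm_on T (inv_into T g)"
    unfolding op_norm_on_def using subspace
    by (intro cSup_upper[OF _ bdd_above_inv_norms]) (auto simp: subspace_0)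
  then show ?thesis
    using norm_ge_zero[of "inv_into T g 0"] by linarith
qed

lemma norm_le_op_norm_inv:
  assumes "y \<in> T"
  shows "norm y \<le> op_norm_on T (inv_into T g) * norm (g y)"
proof (cases "g y = 0")
  case True
  then have "y = 0"
    using inj assms linear_inj_on_iff_eq_0[OF linear subspace] by blast
  then show ?thesis
    using op_norm_inv_nonneg by simp
next
  case False
  define c where "c = 1 / norm (g y)"
  have "g y \<in> T"
    using bij assms bij_betwE by blast
  then have "c *\<^sub>R g y \<in> T" "norm (c *\<^sub>R g y) \<le> 1"
    using subspace False by (auto simp: c_def subspace_scale)
  moreover have "inv_into T g (c *\<^sub>R g y) = c *\<^sub>R y"
  proof -
    have "g (c *\<^sub>R y) = c *\<^sub>R g y"
      using linear by (rule linear_scale)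
    then show ?thesis
      using inj assms subspace subspace_scale inv_into_f_f by metis
  qed
  ultimately have "norm (c *\<^sub>R y) \<le> op_norm_on T (inv_into T g)"
    unfolding op_norm_on_def by (intro cSup_upper[OF _ bdd_above_inv_norms]) force
  then show ?thesis
    using False by (simp add: c_def field_simps)
qed

lemma op_norm_inv_le:
  assumes "0 \<le> C" and "\<And>y. y \<in> T \<Longrightarrow> norm y \<le> C * norm (g y)"
  shows "op_norm_on T (inv_into T g) \<le> C"
  unfolding op_norm_on_def
proof (rule cSup_least)
  show "{norm (inv_into T g y) |y. y \<in> T \<and> norm y \<le> 1} \<noteq> {}"
    using subspace subspace_0 by fastforce
next
  fix r assume "r \<in> {norm (inv_into T g y) |y. y \<in> T \<and> norm y \<le> 1}"
  then obtain y where y: "y \<in> T" "norm y \<le> 1" "r = norm (inv_into T g y)"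
    by blast
  have "inv_into T g y \<in> T" "g (inv_into T g y) = y"
    using bij y(1) by (auto simp: bij_betw_def inv_into_into f_inv_into_f)
  then have "r \<le> C * norm y"
    using assms(2) y(3) by fastforce
  also have "\<dots> \<le> C"
    using assms(1) y(2) by (simp add: mult_left_le)
  finally show "r \<le> C" .
qed

end

locale inverse_perturbation = linear_bij_on_subspace T g
  for T :: "(complex^'n) set" and g +
  fixes g' :: "complex^'n \<Rightarrow> complex^'n" and d e :: real
  assumes linear': "linear g'" and image_subset': "g' ` T \<subseteq> T" and d_nonneg: "0 \<le> d"
    and close: "\<And>y. y \<in> T \<Longrightarrow> norm (g' y - g y) \<le> d * norm y"
    and small: "op_norm_on T (inv_into T g) * d \<le> e" and e_less_1: "e < 1"
begin

abbreviation M where "M \<equiv> op_norm_on T (inv_into T g)"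

lemma e_nonneg: "0 \<le> e"
  using small op_norm_inv_nonneg d_nonneg by (meson mult_nonneg_nonneg order_trans)

lemma norm_le_perturbed:
  assumes "y \<in> T"
  shows "(1 - e) * norm y \<le> M * norm (g' y)"
proof -
  have "norm y \<le> M * norm (g y)"
    using norm_le_op_norm_inv[OF assms] .
  also have "\<dots> \<le> M * (norm (g' y) + d * norm y)"
    using close[OF assms] norm_triangle_ineq3[of "g y" "g' y"] op_norm_inv_nonneg
    by (intro mult_left_mono) (auto simp: norm_minus_commute)
  also have "\<dots> = M * norm (g' y) + (M * d) * norm y"
    by (simp add: algebra_simps)
  also have "\<dots> \<le> M * norm (g' y) + e * norm y"
    using small by (simp add: mult_right_mono)
  finally show ?thesis
    by (simp add: algebra_simps)
qed

lemma norm_perturbed_le: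
  assumes "y \<in> T"
  shows "norm (g' y) \<le> (1 + e) * norm (g y)"
proof -
  have "d * norm y \<le> d * (M * norm (g y))"
    using norm_le_op_norm_inv[OF assms] d_nonneg by (rule mult_left_mono)
  also have "\<dots> = (M * d) * norm (g y)"
    by (simp add: mult_ac)
  also have "\<dots> \<le> e * norm (g y)"
    using small by (rule mult_right_mono) simp
  finally show ?thesis
    using close[OF assms] norm_triangle_ineq2[of "g' y" "g y"] by (simp add: algebra_simps)
qed

lemma bij_perturbed: "bij_betw g' T T"
proof -
  have "x = 0" if "x \<in> T" "g' x = 0" for x
    using norm_le_perturbed[OF that(1)] that(2) e_less_1 by (simp add: mult_le_0_iff)
  then have inj': "inj_on g' T"
    using linear_inj_on_iff_eq_0[OF linear' subspace] by blast
  have "g' ` T = T"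
  proof (rule subspace_dim_equal)
    show "subspace (g' ` T)"
      by (rule linear_subspace_image[OF linear' subspace])
    have "inj_on g' (span T)"
      using inj' subspace by (simp add: span_eq_iff[THEN iffD2])
    then show "dim T \<le> dim (g' ` T)"
      using dim_image_eq[OF linear'] by simp
  qed (fact image_subset' subspace)+
  then show ?thesis
    using inj' by (simp add: bij_betw_def)
qed

sublocale perturbed: linear_bij_on_subspace T g'
  by (rule linear_bij_on_subspace.intro[OF linear' subspace bij_perturbed])

lemma op_norm_inv_perturbed_le: "op_norm_on T (inv_into T g') \<le> M / (1 - e)"
  using norm_le_perturbed e_less_1 op_norm_inv_nonneg
  by (intro perturbed.op_norm_inv_le) (simp_all add: field_simps)

lemma op_norm_inv_perturbed_ge: "(1 - e) * M \<le> op_norm_on T (inv_into T g')"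
proof -
  define M' where "M' = op_norm_on T (inv_into T g')"
  have M'_nonneg: "0 \<le> M'"
    unfolding M'_def by (rule perturbed.op_norm_inv_nonneg)
  have "M \<le> M' * (1 + e)"
  proof (rule op_norm_inv_le)
    fix y assume "y \<in> T"
    have "norm y \<le> M' * norm (g' y)"
      unfolding M'_def using perturbed.norm_le_op_norm_inv[OF \<open>y \<in> T\<close>] .
    also have "\<dots> \<le> M' * ((1 + e) * norm (g y))"
      using norm_perturbed_le[OF \<open>y \<in> T\<close>] M'_nonneg by (rule mult_left_mono)
    finally show "norm y \<le> M' * (1 + e) * norm (g y)"
      by (simp add: mult.assoc)
  qed (use M'_nonneg e_nonneg in simp)
  then have "(1 - e) * M \<le> (1 - e) * (1 + e) * M'"
    using e_less_1 by (simp add: mult_left_mono mult_ac)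
  also have "\<dots> \<le> M'"
    using M'_nonneg e_nonneg by (simp add: algebra_simps)
  finally show ?thesis
    unfolding M'_def .
qed

end

theorem lemma4p3:
  fixes A A' :: "complex^'n^'n" and l l' :: complex and v :: "complex^'n" and \<epsilon> :: real
  assumes "frob_norm A = 1" and "frob_norm A' = 1"
    and "v \<noteq> 0"
    and "mu A l v * ereal (frob_norm (A' - A) + cmod (l' - l)) \<le> ereal \<epsilon>"
    and "\<epsilon> < 1"
  shows "ereal (1 - \<epsilon>) * mu A l v \<le> mu A' l' v \<and> mu A' l' v \<le> ereal (1 / (1 - \<epsilon>)) * mu A l v"
proof -
  define d where "d = frob_norm (A' - A) + cmod (l' - l)"
  have d_nonneg: "0 \<le> d"
    by (simp add: d_def frob_norm_nonneg)
  have close: "norm (A_lv A' l' v y - A_lv A l v y) \<le> d * norm y" for y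
    unfolding d_def using norm_A_lv_diff_le[OF assms(3)] .
  show ?thesis
  proof (cases "bij_betw (A_lv A l v) (orth_comp v) (orth_comp v)")
    case True
    have mu_A: "mu A l v = ereal (op_norm_on (orth_comp v) (inv_into (orth_comp v) (A_lv A l v)))"
      using True assms(1) by (simp add: mu_def)
    interpret inverse_perturbation "orth_comp v" "A_lv A l v" "A_lv A' l' v" d \<epsilon>
      using True close d_nonneg assms(4,5) unfolding mu_A d_def[symmetric]
      by (intro inverse_perturbation.intro linear_bij_on_subspace.intro inverse_perturbation_axioms.intro)
        (simp_all add: linear_A_lv subspace_orth_comp A_lv_image_subset assms(3))
    show ?thesis
      using op_norm_inv_perturbed_le op_norm_inv_perturbed_ge bij_perturbed assms(2)
      unfolding mu_A by (simp add: mu_def)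
  next
    case False
    then have mu_A: "mu A l v = \<infinity>"
      by (simp add: mu_def)
    then have "d = 0"
      using assms(4) d_nonneg unfolding d_def[symmetric] by (cases "d = 0") auto
    then have "\<not> bij_betw (A_lv A' l' v) (orth_comp v) (orth_comp v)"
      using False close bij_betw_cong[of "orth_comp v" "A_lv A' l' v" "A_lv A l v"] by fastforce
    then have "mu A' l' v = \<infinity>"
      by (simp add: mu_def)
    then show ?thesis
      using mu_A assms(5) by simp
  qed
qed

end
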